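(* Let $\mathcal P$ be a stationary Poisson point process of unit intensity on $\mathbb{R}^d$ and let $(A_n)_{n\ge1}$ be a sequence in $\mathfrak A$ with $A_n\to\mathbb{R}^d$. Let $\mathcal D_n=\mathcal D(\mathcal P\cap A_n)$ and $\mathring{\mathcal D}_n=\mathcal D((\mathcal P\cap A_n)\cup\{\mathbf 0\})$. Then there exist almost surely finite random variables $L,M$ and (random) simplices $\sigma_1,\dots,\sigma_L$ such that for all $n>M$, \[ \mathcal D_n\,\triangle\,\mathring{\mathcal D}_n=\{\sigma_1,\dots,\sigma_L\},\] and moreover $w(\sigma_i)\le M$ for all $i\le L$.
   Context: $W_m=\left[-\tfrac{m^{1/d}}{2},\tfrac{m^{1/d}}{2}\right]^d$; $\mathfrak A$ is the collection of sets $W_m+x$, $m\ge1$, $x\in\mathbb{R}^d$; $A_n\to\mathbb{R}^d$ means $\bigcup_{n}\bigcap_{m\ge n}A_m=\mathbb{R}^d$. For a finite set $\mathcal X\subset\mathbb{R}^d$ in general position, $\mathrm{Vor}_{\mathcal X}(x)=\{y:|y-x|\le|y-x'|\ \forall x'\in\mathcal X\}$, the Delaunay complex $\mathcal D(\mathcal X)$ consists of all $[x_0,\dots,x_k]$ with $\bigcap_i\mathrm{Vor}_{\mathcal X}(x_i)\ne\emptyset$, with weight $w([x_0,\dots,x_k])=\inf\{s:\bigcap_i(B_s(x_i)\cap\mathrm{Vor}_{\mathcal X}(x_i))\ne\emptyset\}$ (here computed in whichever of the two complexes contains the simplex). $\triangle$ denotes symmetric difference of sets of simplices. *)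

theory Defs
  imports "HOL-Probability.Probability"
begin

text \<open>A stationary Poisson point process of unit intensity on the euclidean space 'a,
  realised on the probability space M as a map from outcomes to locally finite
  point configurations (sets of points).\<close>

definition unit_poisson_pp :: "'b measure \<Rightarrow> ('b \<Rightarrow> 'a::euclidean_space set) \<Rightarrow> bool" where
  "unit_poisson_pp M P \<longleftrightarrow>
     prob_space M \<and>
     (\<forall>\<omega>\<in>space M. \<forall>B. bounded B \<longrightarrow> finite (P \<omega> \<inter> B)) \<and>
     (\<forall>B. B \<in> sets borel \<and> bounded B \<longrightarrow>
        (\<lambda>\<omega>. card (P \<omega> \<inter> B)) \<in> measurable M (count_space UNIV) \<and>
        (\<forall>k::nat. measure M {\<omega>\<in>space M. card (P \<omega> \<inter> B) = k}
            = measure lborel B ^ k / fact k * exp (- measure lborel B))) \<and>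
     (\<forall>(I::nat set) (B::nat \<Rightarrow> 'a set). finite I \<and> disjoint_family_on B I \<and>
        (\<forall>i\<in>I. B i \<in> sets borel \<and> bounded (B i)) \<longrightarrow>
        prob_space.indep_vars M (\<lambda>_. count_space UNIV) (\<lambda>i \<omega>. card (P \<omega> \<inter> B i)) I)"

text \<open>W_m = [-m^(1/d)/2, m^(1/d)/2]^d, the cube of volume m centred at the origin.\<close>

definition W :: "real \<Rightarrow> 'a::euclidean_space set" where
  "W m = {y. \<forall>b\<in>Basis. \<bar>y \<bullet> b\<bar> \<le> m powr (1 / real DIM('a)) / 2}"

definition frakA :: "'a::euclidean_space set set" where
  "frakA = {(\<lambda>y. y + x) ` W m | m x. m \<ge> 1}"

definition tends_to_space :: "(nat \<Rightarrow> 'a set) \<Rightarrow> bool" where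
  "tends_to_space A \<longleftrightarrow> (\<Union>n\<in>{1..}. \<Inter>m\<in>{n..}. A m) = UNIV"

definition Vor :: "'a::euclidean_space set \<Rightarrow> 'a \<Rightarrow> 'a set" where
  "Vor X x = {y. \<forall>x'\<in>X. norm (y - x) \<le> norm (y - x')}"

text \<open>A simplex [x_0,...,x_k] is identified with its (nonempty) vertex set.\<close>

definition delaunay :: "'a::euclidean_space set \<Rightarrow> 'a set set" where
  "delaunay X = {S. S \<noteq> {} \<and> S \<subseteq> X \<and> (\<Inter>x\<in>S. Vor X x) \<noteq> {}}"

definition dweight :: "'a::euclidean_space set \<Rightarrow> 'a set \<Rightarrow> real" where
  "dweight X S = Inf {s. (\<Inter>x\<in>S. cball x s \<inter> Vor X x) \<noteq> {}}"

definition symdiff :: "'c set \<Rightarrow> 'c set \<Rightarrow> 'c set" where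
  "symdiff A B = (A - B) \<union> (B - A)"

end

theory Submission
  imports Defs
begin

text \<open>
  Suppose every one of the 2^d orthant boxes of scale k (the cube [k, 2k]^d reflected into an
  orthant) contains a point of X. Then the Voronoi cell of the origin in X \<union> {0} lies in the
  ball of radius R = 2 d^2 k: a point y of that cell is no farther from 0 than from the point p
  of X in the box of its own orthant, while y \<bullet> p \<ge> k |y|. A simplex of the symmetric
  difference either contains 0, and then its dual Voronoi face lies in the cell of 0, or it is
  destroyed by inserting 0, and then all points of its face are strictly closer to 0 than to its
  vertices. Conversely, whether a simplex is
  destroyed is decided by the part of its face in the R-ball: the face is convex and meets the
  bisector of 0 and a vertex only inside the cell of 0. Face points in the R-ball only see the
  points of X in the 3R-ball, so the symmetric difference depends only on X \<inter> B(0, 3R), and its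
  weights are at most 2R.

  For the Poisson process a given orthant box of scale k is empty with probability
  exp (-k^d), so almost surely some scale k works; once the window A_n contains B(0, 3R),
  the symmetric difference is the fixed finite set computed from P \<inter> B(0, 3R).
\<close>

section \<open>Voronoi cells and Delaunay simplices\<close>

lemma Vor_antimono: "Y \<subseteq> X \<Longrightarrow> Vor X x \<subseteq> Vor Y x"
  unfolding Vor_def by auto

lemma mem_Vor_insert:
  "y \<in> Vor (insert q X) x \<longleftrightarrow> y \<in> Vor X x \<and> norm (y - x) \<le> norm (y - q)"
  unfolding Vor_def by auto

lemma norm_diff_le_iff_inner:
  fixes w x x' :: "'a::real_inner"
  shows "norm (w - x) \<le> norm (w - x') \<longleftrightarrow> 2 * (w \<bullet> (x' - x)) \<le> x' \<bullet> x' - x \<bullet> x"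
proof -
  have "norm (w - x) \<le> norm (w - x') \<longleftrightarrow> (norm (w - x))\<^sup>2 \<le> (norm (w - x'))\<^sup>2"
    using norm_ge_zero power2_le_imp_le power_mono by blast
  also have "\<dots> \<longleftrightarrow> 2 * (w \<bullet> (x' - x)) \<le> x' \<bullet> x' - x \<bullet> x"
    by (simp add: power2_norm_eq_inner inner_diff_left inner_diff_right inner_commute algebra_simps)
  finally show ?thesis .
qed

lemma convex_Vor: "convex (Vor X x)"
proof -
  have "Vor X x = (\<Inter>x'\<in>X. {y. 2 * (y \<bullet> (x' - x)) \<le> x' \<bullet> x' - x \<bullet> x})"
    unfolding Vor_def norm_diff_le_iff_inner by blast
  moreover have "convex {y. 2 * (y \<bullet> (x' - x)) \<le> c}" for x' c
    using convex_halfspace_le[of "2 *\<^sub>R (x' - x)" c] by (simp add: inner_commute)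
  ultimately show ?thesis
    by (simp add: convex_INT)
qed

lemma mem_delaunay: "S \<in> delaunay X \<longleftrightarrow> S \<noteq> {} \<and> S \<subseteq> X \<and> (\<exists>y. \<forall>x\<in>S. y \<in> Vor X x)"
  unfolding delaunay_def by auto

lemma delaunay_subset_Pow: "delaunay X \<subseteq> Pow X"
  unfolding delaunay_def by auto

lemma delaunay_insert_not_mem: "S \<in> delaunay (insert q X) \<Longrightarrow> q \<notin> S \<Longrightarrow> S \<in> delaunay X"
  unfolding mem_delaunay using Vor_antimono[of X "insert q X"] by blast

lemma singleton_mem_symdiff_delaunay_insert:
  assumes "q \<notin> X"
  shows "{q} \<in> symdiff (delaunay X) (delaunay (insert q X))"
proof -
  have "{q} \<in> delaunay (insert q X)"
    unfolding mem_delaunay Vor_def by (intro conjI exI[of _ q]) auto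
  moreover have "{q} \<notin> delaunay X"
    using assms by (simp add: mem_delaunay)
  ultimately show ?thesis
    by (simp add: symdiff_def)
qed

lemma ex_image_atLeastAtMost_eq:
  assumes "finite T" "T \<noteq> {}" "card T \<le> L"
  shows "\<exists>f::nat \<Rightarrow> 'c. f ` {1..L} = T"
proof -
  obtain h where h: "bij_betw h {1..card T} T"
    using ex_bij_betw_nat_finite_1[OF assms(1)] by blast
  have "1 \<le> card T"
    using assms(1,2) by (simp add: Suc_le_eq card_gt_0_iff)
  then have "(\<lambda>i. min i (card T)) ` {1..L} = {1..card T}"
  proof (intro subset_antisym subsetI)
    fix i assume "i \<in> {1..card T}"
    then show "i \<in> (\<lambda>i. min i (card T)) ` {1..L}"
      using assms(3) by (intro rev_image_eqI[of i]) auto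
  qed auto
  then have "(h \<circ> (\<lambda>i. min i (card T))) ` {1..L} = T"
    using h by (metis bij_betw_imp_surj_on image_comp)
  then show ?thesis
    by blast
qed

lemma ex_enumeration_symdiff_delaunay_insert:
  assumes "finite X" "q \<notin> X"
  shows "\<exists>f. f ` {1..(2::nat) ^ (card X + 1)} = symdiff (delaunay X) (delaunay (insert q X))"
proof (rule ex_image_atLeastAtMost_eq)
  have sub: "symdiff (delaunay X) (delaunay (insert q X)) \<subseteq> Pow (insert q X)"
    using delaunay_subset_Pow[of X] delaunay_subset_Pow[of "insert q X"] unfolding symdiff_def by blast
  then show "finite (symdiff (delaunay X) (delaunay (insert q X)))"
    using assms(1) finite_subset by blast
  show "symdiff (delaunay X) (delaunay (insert q X)) \<noteq> {}"
    using singleton_mem_symdiff_delaunay_insert[OF assms(2)] by blast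
  have "card (symdiff (delaunay X) (delaunay (insert q X))) \<le> card (Pow (insert q X))"
    using sub assms(1) by (intro card_mono) auto
  also have "\<dots> = 2 ^ (card X + 1)"
    using assms by (simp add: card_Pow)
  finally show "card (symdiff (delaunay X) (delaunay (insert q X))) \<le> 2 ^ (card X + 1)" .
qed

lemma dweight_le:
  assumes "S \<noteq> {}" "\<forall>x\<in>S. y \<in> Vor X x" "p \<in> X"
  shows "dweight X S \<le> norm (y - p)"
  unfolding dweight_def
proof (rule cInf_lower)
  have "\<forall>x\<in>S. norm (y - x) \<le> norm (y - p)"
    using assms(2,3) unfolding Vor_def by blast
  then have "y \<in> (\<Inter>x\<in>S. cball x (norm (y - p)) \<inter> Vor X x)"
    using assms(2) by (auto simp: dist_norm norm_minus_commute)
  then show "norm (y - p) \<in> {s. (\<Inter>x\<in>S. cball x s \<inter> Vor X x) \<noteq> {}}" by blast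
  obtain x where "x \<in> S" using assms(1) by blast
  then show "bdd_below {s. (\<Inter>x\<in>S. cball x s \<inter> Vor X x) \<noteq> {}}"
    by (intro bdd_belowI[of _ 0]) (auto intro: order.trans[OF zero_le_dist])
qed

definition delaunay_near :: "real \<Rightarrow> 'a::euclidean_space set \<Rightarrow> 'a set set" where
  "delaunay_near R X = {S \<in> delaunay X. (\<Inter>x\<in>S. Vor X x) \<inter> cball 0 R \<noteq> {}}"

lemma mem_delaunay_near:
  "S \<in> delaunay_near R X \<longleftrightarrow> S \<noteq> {} \<and> S \<subseteq> X \<and> (\<exists>y. norm y \<le> R \<and> (\<forall>x\<in>S. y \<in> Vor X x))"
  unfolding delaunay_near_def mem_delaunay by auto

lemma delaunay_near_subset: "delaunay_near R X \<subseteq> delaunay X"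
  unfolding delaunay_near_def by blast

lemma delaunay_near_insert_not_mem:
  "S \<in> delaunay_near R (insert q X) \<Longrightarrow> q \<notin> S \<Longrightarrow> S \<in> delaunay_near R X"
  unfolding mem_delaunay_near using Vor_antimono[of X "insert q X"] by blast

lemma Vor_inter_cball_iff:
  assumes "p \<in> X" "norm p \<le> R" "norm y \<le> R"
  shows "y \<in> Vor (X \<inter> cball 0 (3 * R)) x \<longleftrightarrow> y \<in> Vor X x"
proof
  assume y: "y \<in> Vor (X \<inter> cball 0 (3 * R)) x"
  have "p \<in> X \<inter> cball 0 (3 * R)"
    using assms(1,2) norm_ge_zero[of p] by (simp del: norm_ge_zero)
  then have "norm (y - x) \<le> norm (y - p)"
    using y unfolding Vor_def by blast
  also have "\<dots> \<le> 2 * R"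
    using norm_triangle_ineq4[of y p] assms(2,3) by linarith
  \<comment> \<open>points outside the 3R-ball are farther than 2R from y, hence never nearest\<close>
  finally have "norm (y - x) \<le> norm (y - x')" if "x' \<in> X" "norm x' > 3 * R" for x'
    using norm_triangle_ineq2[of x' y] assms(3) that by (simp add: norm_minus_commute)
  then show "y \<in> Vor X x"
    using y unfolding Vor_def by (force simp: not_le)
qed (use Vor_antimono in blast)

lemma delaunay_near_inter_cball:
  assumes "p \<in> X" "norm p \<le> R"
  shows "delaunay_near R (X \<inter> cball 0 (3 * R)) = delaunay_near R X"
proof -
  have "norm x \<le> 3 * R" if "y \<in> Vor X x" "norm y \<le> R" for x y
  proof -
    have "norm (y - x) \<le> norm (y - p)"
      using that(1) assms(1) unfolding Vor_def by blast
    then show ?thesis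
      using norm_triangle_ineq4[of y p] norm_triangle_ineq3[of x y] assms(2) that(2)
      by (simp add: norm_minus_commute)
  qed
  then show ?thesis
    unfolding mem_delaunay_near set_eq_iff using Vor_inter_cball_iff[OF assms] by auto
qed

lemma dweight_le_if_delaunay_near:
  assumes "S \<in> delaunay_near R X" "p \<in> X" "norm p \<le> R'"
  shows "dweight X S \<le> R + R'"
proof -
  obtain y where y: "norm y \<le> R" "\<forall>x\<in>S. y \<in> Vor X x" and "S \<noteq> {}"
    using assms(1) unfolding mem_delaunay_near by blast
  then have "dweight X S \<le> norm (y - p)"
    using dweight_le assms(2) by blast
  also have "\<dots> \<le> R + R'"
    using norm_triangle_ineq4[of y p] y(1) assms(3) by linarith
  finally show ?thesis .
qed

section \<open>Orthant boxes\<close>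

definition orthant_box :: "'a::euclidean_space set \<Rightarrow> real \<Rightarrow> 'a set" where
  "orthant_box S k =
     {p. \<forall>b\<in>Basis. if b \<in> S then k \<le> p \<bullet> b \<and> p \<bullet> b \<le> 2 * k else - 2 * k \<le> p \<bullet> b \<and> p \<bullet> b \<le> - k}"

definition meets_orthant_boxes :: "'a::euclidean_space set \<Rightarrow> real \<Rightarrow> bool" where
  "meets_orthant_boxes X k \<longleftrightarrow> (\<forall>S\<subseteq>Basis. X \<inter> orthant_box S k \<noteq> {})"

lemma orthant_box_eq_cbox:
  "orthant_box S k =
     cbox (\<Sum>b\<in>Basis. (if b \<in> S then k else - 2 * k) *\<^sub>R b) (\<Sum>b\<in>Basis. (if b \<in> S then 2 * k else - k) *\<^sub>R b)"
proof -
  have "(if b \<in> S then k \<le> x \<bullet> b \<and> x \<bullet> b \<le> 2 * k else - 2 * k \<le> x \<bullet> b \<and> x \<bullet> b \<le> - k)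
    \<longleftrightarrow> (if b \<in> S then k else - 2 * k) \<le> x \<bullet> b \<and> x \<bullet> b \<le> (if b \<in> S then 2 * k else - k)" for x :: 'a and b
    by simp
  then show ?thesis
    unfolding orthant_box_def set_eq_iff mem_box by simp
qed

lemma orthant_box_borel: "orthant_box S k \<in> sets borel"
  and orthant_box_bounded: "bounded (orthant_box S k)"
  by (simp_all add: orthant_box_eq_cbox)

lemma measure_orthant_box:
  assumes "k \<ge> 0"
  shows "measure lborel (orthant_box S k :: 'a::euclidean_space set) = k ^ DIM('a)"
proof -
  have "(if b \<in> S then 2 * k else - k) - (if b \<in> S then k else - 2 * k) = k" for b :: 'a
    by simp
  then show ?thesis
    using assms by (simp add: orthant_box_eq_cbox measure_lborel_cbox_eq inner_diff_left)
qed

lemma norm_le_if_mem_orthant_box: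
  fixes p :: "'a::euclidean_space"
  assumes "p \<in> orthant_box S k"
  shows "norm p \<le> 2 * real DIM('a) * k"
proof -
  have "norm p \<le> (\<Sum>b\<in>Basis. \<bar>p \<bullet> b\<bar>)"
    by (rule norm_le_l1)
  also have "\<dots> \<le> (\<Sum>b\<in>(Basis::'a set). 2 * k)"
    using assms unfolding orthant_box_def by (intro sum_mono) (auto split: if_splits)
  finally show ?thesis
    by simp
qed

lemma meets_orthant_boxes_near_point:
  fixes X :: "'a::euclidean_space set"
  assumes "meets_orthant_boxes X k"
  shows "\<exists>p\<in>X. norm p \<le> 2 * real DIM('a) * k"
  using assms norm_le_if_mem_orthant_box unfolding meets_orthant_boxes_def by blast

lemma meets_orthant_boxes_mono:
  fixes X :: "'a::euclidean_space set"
  assumes "meets_orthant_boxes X k" "X \<inter> cball 0 (2 * real DIM('a) * k) \<subseteq> Y"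
  shows "meets_orthant_boxes Y k"
  unfolding meets_orthant_boxes_def
proof (intro allI impI)
  fix S :: "'a set" assume "S \<subseteq> Basis"
  then obtain p where "p \<in> X" "p \<in> orthant_box S k"
    using assms(1) unfolding meets_orthant_boxes_def by blast
  then have "p \<in> Y \<inter> orthant_box S k"
    using assms(2) norm_le_if_mem_orthant_box[of p S k] by auto
  then show "Y \<inter> orthant_box S k \<noteq> {}"
    by blast
qed

lemma inner_ge_if_mem_orthant_box:
  assumes "p \<in> orthant_box {b\<in>Basis. 0 \<le> y \<bullet> b} k" "k \<ge> 0"
  shows "k * norm y \<le> y \<bullet> p"
proof -
  have "k * \<bar>y \<bullet> b\<bar> \<le> (y \<bullet> b) * (p \<bullet> b)" if "b \<in> Basis" for b
  proof (cases "0 \<le> y \<bullet> b")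
    case True
    then have "k \<le> p \<bullet> b"
      using assms(1) that unfolding orthant_box_def by (metis (mono_tags, lifting) mem_Collect_eq)
    then show ?thesis
      using True by (simp add: mult_right_mono mult.commute)
  next
    case False
    then have "p \<bullet> b \<le> - k"
      using assms(1) that unfolding orthant_box_def by (metis (mono_tags, lifting) mem_Collect_eq)
    then show ?thesis
      using False mult_right_mono_neg[of "p \<bullet> b" "- k" "y \<bullet> b"] by (simp add: mult.commute)
  qed
  then have "k * (\<Sum>b\<in>Basis. \<bar>y \<bullet> b\<bar>) \<le> (\<Sum>b\<in>Basis. (y \<bullet> b) * (p \<bullet> b))"
    by (simp add: sum_distrib_left sum_mono)
  moreover have "k * norm y \<le> k * (\<Sum>b\<in>Basis. \<bar>y \<bullet> b\<bar>)"
    using norm_le_l1 assms(2) by (rule mult_left_mono)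
  moreover have "y \<bullet> p = (\<Sum>b\<in>Basis. (y \<bullet> b) * (p \<bullet> b))"
    by (rule euclidean_inner)
  ultimately show ?thesis
    by linarith
qed

lemma Vor_origin_subset_cball:
  fixes X :: "'a::euclidean_space set"
  assumes "meets_orthant_boxes X k" "k > 0"
  shows "Vor (insert 0 X) 0 \<subseteq> cball 0 (2 * real DIM('a)^2 * k)"
proof
  fix y assume y: "y \<in> Vor (insert 0 X) 0"
  have "X \<inter> orthant_box {b\<in>Basis. 0 \<le> y \<bullet> b} k \<noteq> {}"
    using assms(1) unfolding meets_orthant_boxes_def by (metis (no_types, lifting) mem_Collect_eq subsetI)
  then obtain p where p: "p \<in> X" "p \<in> orthant_box {b\<in>Basis. 0 \<le> y \<bullet> b} k"
    by blast
  have "norm (y - 0) \<le> norm (y - p)"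
    using y p(1) unfolding Vor_def by blast
  then have "2 * (y \<bullet> p) \<le> (norm p)\<^sup>2"
    by (simp only: norm_diff_le_iff_inner) (simp add: power2_norm_eq_inner)
  also have "\<dots> \<le> (2 * real DIM('a) * k)\<^sup>2"
    using norm_le_if_mem_orthant_box[OF p(2)] by (intro power_mono) auto
  also have "\<dots> = k * (4 * real DIM('a)^2 * k)"
    by (simp add: power2_eq_square)
  finally have "2 * (y \<bullet> p) \<le> k * (4 * real DIM('a)^2 * k)" .
  moreover have "k * norm y \<le> y \<bullet> p"
    using inner_ge_if_mem_orthant_box[OF p(2)] assms(2) by simp
  ultimately have "k * (2 * norm y) \<le> k * (4 * real DIM('a)^2 * k)"
    by linarith
  then have "2 * norm y \<le> 4 * real DIM('a)^2 * k"
    using assms(2) by (rule mult_left_le_imp_le)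
  then show "y \<in> cball 0 (2 * real DIM('a)^2 * k)"
    by (simp add: mult.commute)
qed

section \<open>Locality of the symmetric difference\<close>

lemma delaunay_near_if_origin_mem:
  fixes Y :: "'a::euclidean_space set"
  assumes "meets_orthant_boxes Y k" "k > 0" "S \<in> delaunay (insert 0 Y)" "0 \<in> S"
  shows "S \<in> delaunay_near (2 * real DIM('a)^2 * k) (insert 0 Y)"
proof -
  obtain y where y: "\<forall>x\<in>S. y \<in> Vor (insert 0 Y) x"
    using assms(3) unfolding mem_delaunay by blast
  then have "norm y \<le> 2 * real DIM('a)^2 * k"
    using Vor_origin_subset_cball[OF assms(1,2)] assms(4) by fastforce
  then show ?thesis
    using assms(3) y unfolding mem_delaunay mem_delaunay_near by blast
qed

lemma delaunay_near_if_not_delaunay_insert_origin: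
  fixes Y :: "'a::euclidean_space set"
  assumes "meets_orthant_boxes Y k" "k > 0" "S \<in> delaunay Y" "S \<notin> delaunay (insert 0 Y)"
  shows "S \<in> delaunay_near (2 * real DIM('a)^2 * k) Y"
proof -
  obtain y where y: "\<forall>x\<in>S. y \<in> Vor Y x" and S: "S \<noteq> {}" "S \<subseteq> Y"
    using assms(3) unfolding mem_delaunay by blast
  obtain x1 where x1: "x1 \<in> S" "norm (y - x1) > norm y"
    using assms(4) y S unfolding mem_delaunay mem_Vor_insert by fastforce
  have "y \<in> Vor (insert 0 Y) 0"
    using y x1 unfolding Vor_def by force
  then have "norm y \<le> 2 * real DIM('a)^2 * k"
    using Vor_origin_subset_cball[OF assms(1,2)] by fastforce
  then show ?thesis
    using S y unfolding mem_delaunay_near by blast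
qed

lemma delaunay_near_insert_origin:
  fixes Y :: "'a::euclidean_space set"
  assumes "meets_orthant_boxes Y k" "k > 0"
    and "S \<in> delaunay_near (2 * real DIM('a)^2 * k) Y" "S \<in> delaunay (insert 0 Y)"
  shows "S \<in> delaunay_near (2 * real DIM('a)^2 * k) (insert 0 Y)"
proof -
  define R where "R = 2 * real DIM('a)^2 * k"
  define C where "C = (\<Inter>x\<in>S. Vor Y x)"
  obtain y where y: "norm y \<le> R" "y \<in> C" and S: "S \<noteq> {}" "S \<subseteq> Y"
    using assms(3) unfolding mem_delaunay_near C_def R_def by blast
  obtain z where z: "\<forall>x\<in>S. z \<in> Vor (insert 0 Y) x"
    using assms(4) unfolding mem_delaunay by blast
  obtain x0 where x0: "x0 \<in> S"
    using S by blast
  have near_origin: "w \<in> Vor (insert 0 Y) x" if "w \<in> C" "norm (w - x0) \<le> norm w" "x \<in> S" for w x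
    using that x0 S unfolding C_def Vor_def by force
  show ?thesis
  proof (cases "norm (y - x0) \<le> norm y")
    case True
    then show ?thesis
      using near_origin y S unfolding mem_delaunay_near R_def by blast
  next
    case False
    \<comment> \<open>Inside the convex set C, the way from y to z crosses the bisector of 0 and x0;
      the crossing point lies in the Voronoi cell of 0.\<close>
    have "z \<in> C"
      using z Vor_antimono[of Y "insert 0 Y"] unfolding C_def by blast
    moreover have "x0 \<bullet> y \<le> x0 \<bullet> x0 / 2" "x0 \<bullet> x0 / 2 \<le> x0 \<bullet> z"
      using False z x0 norm_diff_le_iff_inner[of _ x0 0]
      by (auto simp: mem_Vor_insert inner_commute)
    moreover have "connected C"
      unfolding C_def by (intro convex_connected convex_INT ballI convex_Vor)
    ultimately obtain w where w: "w \<in> C" "x0 \<bullet> w = x0 \<bullet> x0 / 2"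
      using connected_ivt_hyperplane y(2) by blast
    then have "norm (w - x0) = norm w"
      using norm_diff_le_iff_inner[of w x0 0] norm_diff_le_iff_inner[of w 0 x0]
      by (auto simp: inner_commute)
    then have "w \<in> Vor (insert 0 Y) 0"
      using w(1) x0 unfolding C_def Vor_def by force
    then have "norm w \<le> R"
      using Vor_origin_subset_cball[OF assms(1,2)] unfolding R_def by fastforce
    moreover have "\<forall>x\<in>S. w \<in> Vor (insert 0 Y) x"
      using near_origin w(1) \<open>norm (w - x0) = norm w\<close> by simp
    ultimately show ?thesis
      using S unfolding mem_delaunay_near R_def by blast
  qed
qed

lemma symdiff_delaunay_insert_origin_eq_near:
  fixes Y :: "'a::euclidean_space set"
  assumes "0 \<notin> Y" "meets_orthant_boxes Y k" "k > 0"
  defines "R \<equiv> 2 * real DIM('a)^2 * k"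
  shows "symdiff (delaunay Y) (delaunay (insert 0 Y))
           = symdiff (delaunay_near R Y) (delaunay_near R (insert 0 Y))"
proof (rule set_eqI)
  fix S
  show "S \<in> symdiff (delaunay Y) (delaunay (insert 0 Y))
          \<longleftrightarrow> S \<in> symdiff (delaunay_near R Y) (delaunay_near R (insert 0 Y))"
  proof (cases "0 \<in> S")
    case True
    then have "S \<notin> delaunay Y"
      using assms(1) by (auto simp: mem_delaunay)
    then show ?thesis
      using delaunay_near_if_origin_mem[OF assms(2,3) _ True] delaunay_near_subset
      unfolding symdiff_def R_def by blast
  next
    case False
    then show ?thesis
      using delaunay_insert_not_mem[of S 0 Y] delaunay_near_insert_not_mem[of S R 0 Y]
        delaunay_near_subset[of R Y] delaunay_near_subset[of R "insert 0 Y"]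
        delaunay_near_if_not_delaunay_insert_origin[OF assms(2,3)]
        delaunay_near_insert_origin[OF assms(2,3)]
      unfolding symdiff_def R_def by blast
  qed
qed

lemma symdiff_delaunay_insert_origin_inter_cball:
  fixes X :: "'a::euclidean_space set"
  assumes "0 \<notin> X" "meets_orthant_boxes X k" "k > 0"
  defines "R \<equiv> 2 * real DIM('a)^2 * k"
  shows "symdiff (delaunay X) (delaunay (insert 0 X))
           = symdiff (delaunay (X \<inter> cball 0 (3 * R))) (delaunay (insert 0 (X \<inter> cball 0 (3 * R))))"
proof -
  have R: "2 * real DIM('a) * k \<le> R" "0 \<le> R"
    using assms(3) unfolding R_def by (simp_all add: power2_eq_square mult_right_mono)
  obtain p where p: "p \<in> X" "norm p \<le> R"
    using meets_orthant_boxes_near_point[OF assms(2)] R(1) by fastforce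
  have "meets_orthant_boxes (X \<inter> cball 0 (3 * R)) k"
    using R by (intro meets_orthant_boxes_mono[OF assms(2)]) auto
  moreover have "insert 0 (X \<inter> cball 0 (3 * R)) = insert 0 X \<inter> cball 0 (3 * R)"
    using R(2) by auto
  ultimately show ?thesis
    using symdiff_delaunay_insert_origin_eq_near[OF assms(1-3)]
      symdiff_delaunay_insert_origin_eq_near[of "X \<inter> cball 0 (3 * R)" k] assms(1,3)
      delaunay_near_inter_cball[OF p] delaunay_near_inter_cball[of 0 "insert 0 X" R] R(2)
    unfolding R_def by simp
qed

lemma dweight_le_if_mem_symdiff_delaunay_insert_origin:
  fixes X :: "'a::euclidean_space set"
  assumes "0 \<notin> X" "meets_orthant_boxes X k" "k > 0"
    and S: "S \<in> symdiff (delaunay X) (delaunay (insert 0 X))"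
  defines "R \<equiv> 2 * real DIM('a)^2 * k"
  shows "(S \<in> delaunay X \<longrightarrow> dweight X S \<le> 2 * R)
         \<and> (S \<in> delaunay (insert 0 X) \<longrightarrow> dweight (insert 0 X) S \<le> 2 * R)"
proof -
  have "2 * real DIM('a) * k \<le> R"
    using assms(3) unfolding R_def by (simp add: power2_eq_square mult_right_mono)
  then obtain p where p: "p \<in> X" "norm p \<le> R"
    using meets_orthant_boxes_near_point[OF assms(2)] by fastforce
  have "S \<in> symdiff (delaunay_near R X) (delaunay_near R (insert 0 X))"
    using S symdiff_delaunay_insert_origin_eq_near[OF assms(1-3)] unfolding R_def by simp
  then have "(S \<in> delaunay X \<longrightarrow> S \<in> delaunay_near R X)
             \<and> (S \<in> delaunay (insert 0 X) \<longrightarrow> S \<in> delaunay_near R (insert 0 X))"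
    using S delaunay_near_subset unfolding symdiff_def by blast
  moreover have "S \<in> delaunay_near R X \<Longrightarrow> dweight X S \<le> 2 * R"
    using dweight_le_if_delaunay_near[of S R X p R] p by simp
  moreover have "S \<in> delaunay_near R (insert 0 X) \<Longrightarrow> dweight (insert 0 X) S \<le> 2 * R"
    using dweight_le_if_delaunay_near[of S R "insert 0 X" p R] p by simp
  ultimately show ?thesis
    by blast
qed

section \<open>Windows\<close>

lemma frakA_cube:
  fixes A :: "'a::euclidean_space set"
  assumes "A \<in> frakA"
  shows "\<exists>x c. A = {z. \<forall>b\<in>Basis. \<bar>(z - x) \<bullet> b\<bar> \<le> c}"
proof -
  obtain m x where A: "A = (\<lambda>y. y + x) ` W m"
    using assms unfolding frakA_def by blast
  have "z \<in> A \<longleftrightarrow> z - x \<in> W m" for z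
    unfolding A by (auto intro: rev_image_eqI[of "z - x"])
  then show ?thesis
    unfolding W_def by blast
qed

lemma cball_subset_frakA:
  fixes A :: "'a::euclidean_space set"
  assumes "A \<in> frakA" "\<forall>b\<in>Basis. r *\<^sub>R b \<in> A \<and> - (r *\<^sub>R b) \<in> A"
  shows "cball 0 r \<subseteq> A"
proof
  fix y :: 'a assume y: "y \<in> cball 0 r"
  obtain x c where A: "A = {z. \<forall>b\<in>Basis. \<bar>(z - x) \<bullet> b\<bar> \<le> c}"
    using frakA_cube[OF assms(1)] by blast
  have "\<bar>(y - x) \<bullet> b\<bar> \<le> c" if b: "b \<in> Basis" for b
  proof -
    have "\<bar>(r *\<^sub>R b - x) \<bullet> b\<bar> \<le> c" "\<bar>(- (r *\<^sub>R b) - x) \<bullet> b\<bar> \<le> c"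
      using assms(2) b unfolding A by blast+
    then have "\<bar>r - x \<bullet> b\<bar> \<le> c" "\<bar>- r - x \<bullet> b\<bar> \<le> c"
      using b by (simp_all add: inner_diff_left)
    moreover have "\<bar>y \<bullet> b\<bar> \<le> r"
      using Basis_le_norm[OF b, of y] y by simp
    ultimately show ?thesis
      by (simp add: inner_diff_left abs_le_iff)
  qed
  then show "y \<in> A"
    unfolding A by blast
qed

lemma eventually_mem_if_tends_to_space:
  assumes "tends_to_space A"
  shows "eventually (\<lambda>m. q \<in> A m) sequentially"
proof -
  have "q \<in> (\<Union>n\<in>{1..}. \<Inter>m\<in>{n..}. A m)"
    using assms unfolding tends_to_space_def by simp
  then show ?thesis
    unfolding eventually_sequentially by auto
qed

lemma eventually_cball_subset:
  fixes A :: "nat \<Rightarrow> 'a::euclidean_space set"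
  assumes "\<forall>n\<ge>1. A n \<in> frakA" "tends_to_space A"
  shows "eventually (\<lambda>m. cball 0 r \<subseteq> A m) sequentially"
proof -
  have "eventually (\<lambda>m. \<forall>q\<in>(\<lambda>b. r *\<^sub>R b) ` Basis \<union> (\<lambda>b. - (r *\<^sub>R b)) ` Basis. q \<in> A m) sequentially"
    using eventually_mem_if_tends_to_space[OF assms(2)] by (intro eventually_ball_finite) auto
  moreover have "eventually (\<lambda>m. A m \<in> frakA) sequentially"
    using assms(1) unfolding eventually_sequentially by blast
  ultimately show ?thesis
    by eventually_elim (rule cball_subset_frakA; blast)
qed

lemma symdiff_delaunay_inter_window_eventually:
  fixes X :: "'a::euclidean_space set" and A :: "nat \<Rightarrow> 'a set" and k :: real
  defines "R \<equiv> 2 * real DIM('a)^2 * k"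
  assumes "0 \<notin> X" "meets_orthant_boxes X k" "k > 0" "\<forall>m\<ge>N. cball 0 (3 * R) \<subseteq> A m"
    and \<sigma>: "\<sigma> ` {1..L} = symdiff (delaunay (X \<inter> cball 0 (3 * R))) (delaunay (insert 0 (X \<inter> cball 0 (3 * R))))"
  shows "\<forall>n. real n > real N + 2 * R \<longrightarrow>
           symdiff (delaunay (X \<inter> A n)) (delaunay (insert 0 (X \<inter> A n))) = \<sigma> ` {1..L} \<and>
           (\<forall>i\<in>{1..L}.
              (\<sigma> i \<in> delaunay (X \<inter> A n) \<longrightarrow> dweight (X \<inter> A n) (\<sigma> i) \<le> real N + 2 * R) \<and>
              (\<sigma> i \<in> delaunay (insert 0 (X \<inter> A n)) \<longrightarrow>
                 dweight (insert 0 (X \<inter> A n)) (\<sigma> i) \<le> real N + 2 * R))"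
proof (intro allI impI)
  fix n assume n: "real n > real N + 2 * R"
  have R: "2 * real DIM('a) * k \<le> R" "0 \<le> R"
    using assms(4) unfolding R_def by (simp_all add: power2_eq_square mult_right_mono)
  then have window: "cball 0 (3 * R) \<subseteq> A n"
    using assms(5) n by simp
  then have meets: "meets_orthant_boxes (X \<inter> A n) k"
    using R by (intro meets_orthant_boxes_mono[OF assms(3)]) auto
  have "X \<inter> A n \<inter> cball 0 (3 * R) = X \<inter> cball 0 (3 * R)"
    using window by blast
  then have eq: "symdiff (delaunay (X \<inter> A n)) (delaunay (insert 0 (X \<inter> A n))) = \<sigma> ` {1..L}"
    using symdiff_delaunay_insert_origin_inter_cball[OF _ meets assms(4)] assms(2) \<sigma>
    unfolding R_def by simp
  have "0 \<notin> X \<inter> A n"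
    using assms(2) by blast
  note weights = dweight_le_if_mem_symdiff_delaunay_insert_origin[OF this meets assms(4), folded R_def]
  show "symdiff (delaunay (X \<inter> A n)) (delaunay (insert 0 (X \<inter> A n))) = \<sigma> ` {1..L} \<and>
      (\<forall>i\<in>{1..L}.
         (\<sigma> i \<in> delaunay (X \<inter> A n) \<longrightarrow> dweight (X \<inter> A n) (\<sigma> i) \<le> real N + 2 * R) \<and>
         (\<sigma> i \<in> delaunay (insert 0 (X \<inter> A n)) \<longrightarrow>
            dweight (insert 0 (X \<inter> A n)) (\<sigma> i) \<le> real N + 2 * R))"
  proof (rule conjI[OF eq], intro ballI)
    fix i assume "i \<in> {1..L}"
    then have "\<sigma> i \<in> symdiff (delaunay (X \<inter> A n)) (delaunay (insert 0 (X \<inter> A n)))"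
      using eq by blast
    then show "(\<sigma> i \<in> delaunay (X \<inter> A n) \<longrightarrow> dweight (X \<inter> A n) (\<sigma> i) \<le> real N + 2 * R) \<and>
        (\<sigma> i \<in> delaunay (insert 0 (X \<inter> A n)) \<longrightarrow>
           dweight (insert 0 (X \<inter> A n)) (\<sigma> i) \<le> real N + 2 * R)"
      using weights by (smt (verit) of_nat_0_le_iff)
  qed
qed

section \<open>The Poisson process\<close>

lemma unit_poisson_pp_prob_space: "unit_poisson_pp M P \<Longrightarrow> prob_space M"
  unfolding unit_poisson_pp_def by blast

lemma unit_poisson_pp_finite:
  "unit_poisson_pp M P \<Longrightarrow> \<omega> \<in> space M \<Longrightarrow> bounded B \<Longrightarrow> finite (P \<omega> \<inter> B)"
  unfolding unit_poisson_pp_def by blast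

lemma measurable_card_unit_poisson_pp:
  "unit_poisson_pp M P \<Longrightarrow> B \<in> sets borel \<Longrightarrow> bounded B
    \<Longrightarrow> (\<lambda>\<omega>. card (P \<omega> \<inter> B)) \<in> measurable M (count_space UNIV)"
  unfolding unit_poisson_pp_def by blast

lemma unit_poisson_pp_void:
  assumes pp: "unit_poisson_pp M P" and B: "B \<in> sets borel" "bounded B"
  shows "{\<omega>\<in>space M. P \<omega> \<inter> B = {}} \<in> sets M"
    and "measure M {\<omega>\<in>space M. P \<omega> \<inter> B = {}} = exp (- measure lborel B)"
proof -
  have eq: "{\<omega>\<in>space M. P \<omega> \<inter> B = {}} = (\<lambda>\<omega>. card (P \<omega> \<inter> B)) -` {0} \<inter> space M"
    using unit_poisson_pp_finite[OF pp _ B(2)] by auto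
  show "{\<omega>\<in>space M. P \<omega> \<inter> B = {}} \<in> sets M"
    unfolding eq using measurable_card_unit_poisson_pp[OF pp B] by (rule measurable_sets) simp
  have "measure M {\<omega>\<in>space M. card (P \<omega> \<inter> B) = 0} = measure lborel B ^ 0 / fact 0 * exp (- measure lborel B)"
    using pp B unfolding unit_poisson_pp_def by blast
  moreover have "{\<omega>\<in>space M. card (P \<omega> \<inter> B) = 0} = {\<omega>\<in>space M. P \<omega> \<inter> B = {}}"
    using eq by auto
  ultimately show "measure M {\<omega>\<in>space M. P \<omega> \<inter> B = {}} = exp (- measure lborel B)"
    by simp
qed

lemma AE_origin_not_mem:
  assumes pp: "unit_poisson_pp M P"
  shows "AE \<omega> in M. (0::'a::euclidean_space) \<notin> P \<omega>"
proof -
  interpret prob_space M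
    using unit_poisson_pp_prob_space[OF pp] .
  have "prob {\<omega>\<in>space M. P \<omega> \<inter> {0::'a} = {}} = 1"
    using unit_poisson_pp_void(2)[OF pp, of "{0}"] by simp
  then have "AE \<omega> in M. \<omega> \<in> {\<omega>\<in>space M. P \<omega> \<inter> {0::'a} = {}}"
    by (rule AE_prob_1)
  then show ?thesis
    by eventually_elim auto
qed

lemma measurable_meets_orthant_boxes:
  assumes pp: "unit_poisson_pp M P"
  shows "(\<lambda>\<omega>. meets_orthant_boxes (P \<omega>) k) \<in> measurable M (count_space UNIV)"
proof -
  have "{\<omega>\<in>space M. meets_orthant_boxes (P \<omega>) k}
          = space M - (\<Union>S\<in>Pow Basis. {\<omega>\<in>space M. P \<omega> \<inter> orthant_box S k = {}})"
    unfolding meets_orthant_boxes_def by auto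
  also have "\<dots> \<in> sets M"
    using unit_poisson_pp_void(1)[OF pp orthant_box_borel orthant_box_bounded]
    by (intro sets.Diff sets.top sets.finite_UN) auto
  finally show ?thesis
    by (simp add: Measurable.pred_def)
qed

lemma prob_not_meets_orthant_boxes_le:
  fixes P :: "'b \<Rightarrow> 'a::euclidean_space set"
  assumes pp: "unit_poisson_pp M P" and k: "k \<ge> 1"
  shows "measure M {\<omega>\<in>space M. \<not> meets_orthant_boxes (P \<omega>) (real k)} \<le> 2 ^ DIM('a) / real k"
proof -
  interpret prob_space M
    using unit_poisson_pp_prob_space[OF pp] .
  define F where "F S = {\<omega>\<in>space M. P \<omega> \<inter> orthant_box S (real k) = {}}" for S :: "'a set"
  have "prob {\<omega>\<in>space M. \<not> meets_orthant_boxes (P \<omega>) (real k)} = prob (\<Union>S\<in>Pow Basis. F S)"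
    unfolding meets_orthant_boxes_def F_def by (rule arg_cong[where f = prob]) auto
  also have "\<dots> \<le> (\<Sum>S\<in>Pow Basis. prob (F S))"
    unfolding F_def by (rule measure_UNION_le)
      (auto intro: unit_poisson_pp_void(1)[OF pp orthant_box_borel orthant_box_bounded])
  also have "\<dots> = 2 ^ DIM('a) * exp (- (real k ^ DIM('a)))"
  proof -
    have "prob (F S) = exp (- (real k ^ DIM('a)))" for S
      unfolding F_def unit_poisson_pp_void(2)[OF pp orthant_box_borel orthant_box_bounded]
      by (simp add: measure_orthant_box)
    then show ?thesis
      by (simp add: card_Pow)
  qed
  also have "\<dots> \<le> 2 ^ DIM('a) * (1 / real k)"
  proof -
    have "real k \<le> real k ^ DIM('a)"
      using k DIM_positive by (intro self_le_power) auto
    then have "exp (- (real k ^ DIM('a))) \<le> exp (- real k)"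
      by simp
    also have "\<dots> = 1 / exp (real k)"
      by (simp add: exp_minus inverse_eq_divide)
    also have "\<dots> \<le> 1 / real k"
    proof -
      have "real k \<le> exp (real k)"
        using exp_ge_add_one_self[of "real k"] by linarith
      then show ?thesis
        using k by (intro divide_left_mono) auto
    qed
    finally show ?thesis
      by (rule mult_left_mono) simp
  qed
  finally show ?thesis
    by simp
qed

lemma AE_ex_meets_orthant_boxes:
  fixes P :: "'b \<Rightarrow> 'a::euclidean_space set"
  assumes pp: "unit_poisson_pp M P"
  shows "AE \<omega> in M. \<exists>k::nat. 1 \<le> k \<and> meets_orthant_boxes (P \<omega>) (real k)"
proof -
  interpret prob_space M
    using unit_poisson_pp_prob_space[OF pp] .
  define E where "E k = {\<omega>\<in>space M. \<not> meets_orthant_boxes (P \<omega>) (real k)}" for k :: nat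
  have E: "E k \<in> sets M" for k
    using measurable_meets_orthant_boxes[OF pp] unfolding E_def Measurable.pred_def by (auto intro: sets.sets_Collect_neg)
  define N where "N = (\<Inter>k\<in>{1..}. E k)"
  have N: "N \<in> sets M"
    unfolding N_def using E by auto
  have "prob N \<le> 2 ^ DIM('a) / real k" if "k \<ge> 1" for k
    using finite_measure_mono[of N "E k"] E N that prob_not_meets_orthant_boxes_le[OF pp that]
    unfolding N_def E_def by fastforce
  then have "prob N \<le> 0"
    by (intro LIMSEQ_le_const[OF lim_const_over_n]) blast
  then have "N \<in> null_sets M"
    using N measure_nonneg[of M N] by (simp add: null_sets_def emeasure_eq_measure)
  then show ?thesis
    by (rule AE_I') (auto simp: N_def E_def)
qed

theorem proposition3p12:
  fixes M :: "'b measure" and P :: "'b \<Rightarrow> 'a::euclidean_space set"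
    and A :: "nat \<Rightarrow> 'a set"
  assumes "unit_poisson_pp M P"
    and "\<forall>n\<ge>1. A n \<in> frakA"
    and "tends_to_space A"
  shows "\<exists>(L :: 'b \<Rightarrow> nat) (K :: 'b \<Rightarrow> real) (\<sigma> :: 'b \<Rightarrow> nat \<Rightarrow> 'a set).
           L \<in> measurable M (count_space UNIV) \<and> K \<in> borel_measurable M \<and>
           (AE \<omega> in M. \<forall>n\<ge>1. real n > K \<omega> \<longrightarrow>
              symdiff (delaunay (P \<omega> \<inter> A n)) (delaunay (insert 0 (P \<omega> \<inter> A n)))
                = \<sigma> \<omega> ` {1..L \<omega>} \<and>
              (\<forall>i\<in>{1..L \<omega>}.
                 (\<sigma> \<omega> i \<in> delaunay (P \<omega> \<inter> A n) \<longrightarrow> dweight (P \<omega> \<inter> A n) (\<sigma> \<omega> i) \<le> K \<omega>) \<and>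
                 (\<sigma> \<omega> i \<in> delaunay (insert 0 (P \<omega> \<inter> A n)) \<longrightarrow>
                    dweight (insert 0 (P \<omega> \<inter> A n)) (\<sigma> \<omega> i) \<le> K \<omega>)))"
proof -
  note pp = assms(1)
  \<comment> \<open>choosing the scale by LEAST makes it measurable\<close>
  define k where "k \<omega> = (LEAST k. 1 \<le> k \<and> meets_orthant_boxes (P \<omega>) (real k))" for \<omega>
  define R where "R \<omega> = 2 * real DIM('a)^2 * real (k \<omega>)" for \<omega>
  define N where "N r = (SOME N. \<forall>m\<ge>N. cball (0::'a) r \<subseteq> A m)" for r
  define X0 where "X0 \<omega> = P \<omega> \<inter> cball 0 (3 * R \<omega>)" for \<omega>
  define K where "K \<omega> = real (N (3 * R \<omega>)) + 2 * R \<omega>" for \<omega>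
  \<comment> \<open>L only bounds the size of the symmetric difference, which \<sigma> enumerates with repetitions\<close>
  define L where "L \<omega> = (2::nat) ^ (card (X0 \<omega>) + 1)" for \<omega>
  define \<sigma> where "\<sigma> \<omega> = (SOME f. f ` {1..L \<omega>} = symdiff (delaunay (X0 \<omega>)) (delaunay (insert 0 (X0 \<omega>))))" for \<omega>
  have [measurable]: "(\<lambda>\<omega>. meets_orthant_boxes (P \<omega>) (real i)) \<in> measurable M (count_space UNIV)" for i
    using measurable_meets_orthant_boxes[OF pp] .
  have k_measurable: "k \<in> measurable M (count_space UNIV)"
    unfolding k_def by measurable
  have L_measurable: "L \<in> measurable M (count_space UNIV)"
    unfolding L_def X0_def R_def
    by (rule measurable_compose_countable[OF _ k_measurable],
        rule measurable_compose[OF measurable_card_unit_poisson_pp[OF pp]]) auto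
  have K_measurable: "K \<in> borel_measurable M"
    unfolding K_def R_def by (rule measurable_compose[OF k_measurable]) simp
  have "AE \<omega> in M. \<omega> \<in> space M \<and> 0 \<notin> P \<omega> \<and> (\<exists>k::nat. 1 \<le> k \<and> meets_orthant_boxes (P \<omega>) (real k))"
    using AE_space AE_origin_not_mem[OF pp] AE_ex_meets_orthant_boxes[OF pp] by eventually_elim blast
  then show ?thesis
    apply (intro exI[of _ L] exI[of _ K] exI[of _ \<sigma>] conjI L_measurable K_measurable)
    apply (erule eventually_mono, elim conjE)
    subgoal premises typical for \<omega>
    proof -
      have k: "1 \<le> k \<omega>" "meets_orthant_boxes (P \<omega>) (real (k \<omega>))"
        using LeastI_ex[of "\<lambda>k. 1 \<le> k \<and> meets_orthant_boxes (P \<omega>) (real k)"] typical(3)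
        unfolding k_def by blast+
      have window: "\<forall>m\<ge>N (3 * R \<omega>). cball 0 (3 * R \<omega>) \<subseteq> A m"
        unfolding N_def using eventually_cball_subset[OF assms(2,3)] unfolding eventually_sequentially
        by (rule someI_ex)
      have "finite (X0 \<omega>)" "0 \<notin> X0 \<omega>"
        using unit_poisson_pp_finite[OF pp typical(1)] typical(2) unfolding X0_def by auto
      from ex_enumeration_symdiff_delaunay_insert[OF this]
      have enum: "\<sigma> \<omega> ` {1..L \<omega>} = symdiff (delaunay (X0 \<omega>)) (delaunay (insert 0 (X0 \<omega>)))"
        unfolding \<sigma>_def L_def by (rule someI_ex)
      have "real (k \<omega>) > 0"
        using k(1) by simp
      from symdiff_delaunay_inter_window_eventually[OF typical(2) k(2) this window[unfolded R_def] enum[unfolded X0_def R_def]]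
      show ?thesis
        unfolding K_def R_def by blast
    qed
    done
qed

end
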